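(* Let $n \geq 4$, and let $\beta$ be an integer satisfying $-2 \leq 8\beta - 3n \leq 2$. Then for every $X \subseteq E(H_\beta)$, $$|X|(8\beta - 3n) + t(X) + n(n - 2\beta - 1)\left(2\beta - \frac{n}{2} + 1\right) \leq \frac{n^3}{16}.$$
   Context: Take $n$ vertices arranged in a circle. For distinct vertices $u,v$, $d(u,v) = 1 + |\{w: u,w,v \text{ distinct, in clockwise order}\}|$, and $d(u,u)=0$. $G_\beta$ is the digraph on these $n$ vertices with edge set $\{uv : 0 < d(u,v) \leq \beta\}$, and $H_\beta$ is its spanning subgraph with edge set $\{uv : d(u,v) = \beta\}$. For $X \subseteq E(H_\beta)$, $t(X)$ is the number of vertices incident with exactly one edge of $X$. *)

theory Defs
  imports Complex_Main
begin

text \<open>Vertices of the circle are 0,...,n-1, placed clockwise in increasing order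
  (indices taken mod n).\<close>

definition cw_order :: "nat \<Rightarrow> nat \<Rightarrow> nat \<Rightarrow> nat \<Rightarrow> bool" where
  "cw_order n u w v \<longleftrightarrow> u \<noteq> w \<and> w \<noteq> v \<and> u \<noteq> v \<and>
     (w + n - u) mod n < (v + n - u) mod n"

definition cdist :: "nat \<Rightarrow> nat \<Rightarrow> nat \<Rightarrow> nat" where
  "cdist n u v = (if u = v then 0
     else 1 + card {w. w < n \<and> cw_order n u w v})"

definition H_edges :: "nat \<Rightarrow> int \<Rightarrow> (nat \<times> nat) set" where
  "H_edges n \<beta> = {(u, v). u < n \<and> v < n \<and> int (cdist n u v) = \<beta>}"

definition G_edges :: "nat \<Rightarrow> int \<Rightarrow> (nat \<times> nat) set" where
  "G_edges n \<beta> = {(u, v). u < n \<and> v < n \<and> 0 < int (cdist n u v) \<and> int (cdist n u v) \<le> \<beta>}"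

definition t_count :: "nat \<Rightarrow> (nat \<times> nat) set \<Rightarrow> nat" where
  "t_count n X = card {v. v < n \<and> card {e \<in> X. fst e = v \<or> snd e = v} = 1}"

end

theory Submission
  imports Defs
begin

(* On the vertex set {0,...,n-1} the circular distance is explicit:
   d(u,v) = v - u if u < v and v + n - u otherwise.  Hence every vertex has at most
   one out-neighbour and at most one in-neighbour in H_beta, and for beta >= 1 there
   are no loops.  For any edge set X of such a digraph, the vertices of degree one
   lie among the vertices that are a tail or a head but not both; counting tails and
   heads gives  t(X) <= 2|X|  and  t(X) + 2|X| <= 2n.
   Writing c = 8 beta - 3n, the polynomial term of the theorem equals
   n^3/16 - n (c+4)^2/16, so the claim reduces to  |X| c + t(X) <= n (c+4)^2/16,
   which for -2 <= c <= 2 follows from the two counting inequalities by an explicit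
   nonnegative combination (a linear-programming certificate). *)

lemma mod_shift_eq: "u \<le> (a::nat) \<Longrightarrow> a - u < n \<Longrightarrow> (a + n - u) mod n = a - u"
  by (metis Nat.add_diff_assoc2 mod_add_self2 mod_less)

lemma cw_between_lt:
  assumes "u < v" "v < n"
  shows "{w. w < n \<and> cw_order n u w v} = {u<..<v}"
proof -
  have vv: "(v + n - u) mod n = v - u" using assms by (intro mod_shift_eq) auto
  have "w < n \<and> cw_order n u w v \<longleftrightarrow> w \<in> {u<..<v}" for w
  proof (cases "u \<le> w \<and> w < n")
    case True
    then have "(w + n - u) mod n = w - u" by (intro mod_shift_eq) auto
    then show ?thesis unfolding cw_order_def vv using True assms by auto
  next
    case False
    then show ?thesis unfolding cw_order_def vv using assms by auto
  qed
  then show ?thesis by blast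
qed

lemma cw_between_gt:
  assumes "v < u" "u < n"
  shows "{w. w < n \<and> cw_order n u w v} = {u<..<n} \<union> {..<v}"
proof -
  have vv: "(v + n - u) mod n = v + n - u" using assms by simp
  have "w < n \<and> cw_order n u w v \<longleftrightarrow> w \<in> {u<..<n} \<union> {..<v}" for w
  proof (cases "u \<le> w \<and> w < n")
    case True
    then have "(w + n - u) mod n = w - u" by (intro mod_shift_eq) auto
    then show ?thesis unfolding cw_order_def vv using True assms by auto
  next
    case False
    then show ?thesis unfolding cw_order_def vv using assms by auto
  qed
  then show ?thesis by blast
qed

lemma cdist_closed:
  assumes "u < n" "v < n" "u \<noteq> v"
  shows "cdist n u v = (if u < v then v - u else v + n - u)"
proof (cases "u < v")
  case True
  then show ?thesis
    using assms unfolding cdist_def cw_between_lt[OF True assms(2)] by simp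
next
  case False
  then have vu: "v < u" using assms(3) by simp
  have "card ({u<..<n} \<union> {..<v}) = n - u - 1 + v"
    by (subst card_Un_disjoint) (use vu in auto)
  then show ?thesis
    using assms vu unfolding cdist_def cw_between_gt[OF vu assms(1)] by simp
qed

lemma cdist_pos: "u \<noteq> v \<Longrightarrow> 0 < cdist n u v"
  by (simp add: cdist_def)

lemma cdist_inj_target:
  assumes "u < n" "v < n" "v' < n" "cdist n u v = cdist n u v'"
  shows "v = v'"
proof -
  have "u \<noteq> v \<longleftrightarrow> u \<noteq> v'" using assms(4) cdist_pos by (metis cdist_def less_irrefl)
  then show ?thesis
    using assms cdist_closed[of u n v] cdist_closed[of u n v'] by (auto split: if_splits)
qed

lemma cdist_inj_source:
  assumes "u < n" "u' < n" "v < n" "cdist n u v = cdist n u' v"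
  shows "u = u'"
proof -
  have "u \<noteq> v \<longleftrightarrow> u' \<noteq> v" using assms(4) cdist_pos by (metis cdist_def less_irrefl)
  then show ?thesis
    using assms cdist_closed[of u n v] cdist_closed[of u' n v] by (auto split: if_splits)
qed

lemma H_edges_vertices: "H_edges n \<beta> \<subseteq> {..<n} \<times> {..<n}"
  by (auto simp: H_edges_def)

lemma H_edges_inj_fst: "inj_on fst (H_edges n \<beta>)"
proof (rule inj_onI)
  fix e e' assume "e \<in> H_edges n \<beta>" "e' \<in> H_edges n \<beta>" "fst e = fst e'"
  then show "e = e'" unfolding H_edges_def using cdist_inj_target[of "fst e" n "snd e" "snd e'"]
    by (cases e, cases e') auto
qed

lemma H_edges_inj_snd: "inj_on snd (H_edges n \<beta>)"
proof (rule inj_onI)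
  fix e e' assume "e \<in> H_edges n \<beta>" "e' \<in> H_edges n \<beta>" "snd e = snd e'"
  then show "e = e'" unfolding H_edges_def using cdist_inj_source[of "fst e" n "fst e'" "snd e"]
    by (cases e, cases e') auto
qed

lemma H_edges_loop_free: "\<beta> \<noteq> 0 \<Longrightarrow> e \<in> H_edges n \<beta> \<Longrightarrow> fst e \<noteq> snd e"
  by (auto simp: H_edges_def cdist_def)

text \<open>In a loop-free edge set, a vertex of degree one is a tail or a head of an edge,
  but not both (being both would give two distinct incident edges).\<close>

lemma degree_one_tail_xor_head:
  assumes fin: "finite X" and loop_free: "\<And>e. e \<in> X \<Longrightarrow> fst e \<noteq> snd e"
  shows "{v. v < n \<and> card {e \<in> X. fst e = v \<or> snd e = v} = 1}
           \<subseteq> (fst ` X \<union> snd ` X) - (fst ` X \<inter> snd ` X)"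
proof
  fix v assume "v \<in> {v. v < n \<and> card {e \<in> X. fst e = v \<or> snd e = v} = 1}"
  then have deg: "card {e \<in> X. fst e = v \<or> snd e = v} = 1" by simp
  then obtain e where "{e \<in> X. fst e = v \<or> snd e = v} = {e}" by (rule card_1_singletonE)
  then have "v \<in> fst ` X \<union> snd ` X" by force
  moreover have "v \<notin> fst ` X \<inter> snd ` X"
  proof
    assume "v \<in> fst ` X \<inter> snd ` X"
    then obtain e1 e2 where e: "e1 \<in> X" "e2 \<in> X" "fst e1 = v" "snd e2 = v" by auto
    then have "e1 \<noteq> e2" using loop_free[of e2] by auto
    moreover have "{e1, e2} \<subseteq> {e \<in> X. fst e = v \<or> snd e = v}" using e by auto
    ultimately have "2 \<le> card {e \<in> X. fst e = v \<or> snd e = v}"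
      using card_mono[of "{e \<in> X. fst e = v \<or> snd e = v}" "{e1, e2}"] fin by auto
    then show False using deg by simp
  qed
  ultimately show "v \<in> (fst ` X \<union> snd ` X) - (fst ` X \<inter> snd ` X)" by simp
qed

lemma t_count_bounds:
  assumes X: "X \<subseteq> {..<n} \<times> {..<n}"
    and inj_tail: "inj_on fst X" and inj_head: "inj_on snd X"
    and loop_free: "\<And>e. e \<in> X \<Longrightarrow> fst e \<noteq> snd e"
  shows "t_count n X \<le> 2 * card X" "t_count n X + 2 * card X \<le> 2 * n"
proof -
  define U where "U = fst ` X \<union> snd ` X"
  define I where "I = fst ` X \<inter> snd ` X"
  have fin: "finite X" using X finite_subset by blast
  have finU: "finite U" and IU: "I \<subseteq> U" using fin by (auto simp: U_def I_def)
  have "U \<subseteq> {..<n}" using X by (force simp: U_def)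
  then have U_le: "card U \<le> n" using card_mono[of "{..<n}" U] by simp
  have UI: "card U + card I = 2 * card X"
    using card_Un_Int[of "fst ` X" "snd ` X"] fin card_image[OF inj_tail] card_image[OF inj_head]
    by (simp add: U_def I_def)
  have "t_count n X \<le> card (U - I)"
    unfolding t_count_def U_def I_def
    by (rule card_mono[OF _ degree_one_tail_xor_head[OF fin loop_free]]) (use finU U_def in simp)
  also have "\<dots> = card U - card I"
    using card_Diff_subset[OF _ IU] finite_subset[OF IU finU] by simp
  finally have t: "t_count n X \<le> card U - card I" .
  have "card I \<le> card U" by (rule card_mono[OF finU IU])
  then show "t_count n X \<le> 2 * card X" "t_count n X + 2 * card X \<le> 2 * n"
    using t UI U_le by linarith+
qed

lemma polynomial_term_eq:
  fixes n \<beta> :: real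
  shows "n * (n - 2 * \<beta> - 1) * (2 * \<beta> - n / 2 + 1)
      = n ^ 3 / 16 - n * ((8 * \<beta> - 3 * n) + 4)\<^sup>2 / 16"
  by (simp add: algebra_simps power2_eq_square power3_eq_cube divide_simps)

text \<open>The linear bound: for -2 <= c <= 2 the gap is the nonnegative combination
  ((2-c)/4)(2x - t) + ((2+c)/4)(2n - t - 2x) + n c^2/16.\<close>

lemma linear_bound:
  fixes x t n c :: real
  assumes "-2 \<le> c" "c \<le> 2" "t \<le> 2 * x" "t + 2 * x \<le> 2 * n" "0 \<le> n"
  shows "x * c + t \<le> n * (c + 4)\<^sup>2 / 16"
proof -
  have gap: "n * (c + 4)\<^sup>2 / 16 - (x * c + t)
      = (2 - c) / 4 * (2 * x - t) + (2 + c) / 4 * (2 * n - t - 2 * x) + n * c\<^sup>2 / 16"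
    by (simp add: algebra_simps power2_eq_square divide_simps)
  have "0 \<le> (2 - c) / 4 * (2 * x - t)" "0 \<le> (2 + c) / 4 * (2 * n - t - 2 * x)"
    "0 \<le> n * c\<^sup>2 / 16"
    using assms by simp_all
  then show ?thesis using gap by linarith
qed

theorem mainTheorem15:
  fixes n :: nat and \<beta> :: int and X :: "(nat \<times> nat) set"
  assumes "n \<ge> 4"
    and "-2 \<le> 8 * \<beta> - 3 * int n" and "8 * \<beta> - 3 * int n \<le> 2"
    and "X \<subseteq> H_edges n \<beta>"
  shows "real (card X) * real_of_int (8 * \<beta> - 3 * int n) + real (t_count n X)
      + real n * real_of_int (int n - 2 * \<beta> - 1) * (2 * real_of_int \<beta> - real n / 2 + 1)
      \<le> real n ^ 3 / 16"
proof -
  define c where "c = real_of_int (8 * \<beta> - 3 * int n)"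
  have "\<beta> \<noteq> 0" using assms(1,2) by linarith
  then have counts: "t_count n X \<le> 2 * card X" "t_count n X + 2 * card X \<le> 2 * n"
    using t_count_bounds[of X n] assms(4) H_edges_vertices H_edges_loop_free
      inj_on_subset[OF H_edges_inj_fst] inj_on_subset[OF H_edges_inj_snd] by blast+
  have "real (card X) * c + real (t_count n X) \<le> real n * (c + 4)\<^sup>2 / 16"
    using linear_bound[of c "real (t_count n X)" "real (card X)" "real n"] counts assms(2,3)
    unfolding c_def by linarith
  moreover have "real n * real_of_int (int n - 2 * \<beta> - 1) * (2 * real_of_int \<beta> - real n / 2 + 1)
      = real n ^ 3 / 16 - real n * (c + 4)\<^sup>2 / 16"
    using polynomial_term_eq[of "real n" "real_of_int \<beta>"] by (simp add: c_def)
  ultimately show ?thesis unfolding c_def by linarith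
qed

end
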